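(* Let $d\ge1$, $\delta>0$, $L>0$, and let $F$ be a real-valued function that is continuously differentiable on an open set containing $[-\delta,1+\delta]^d$ and whose gradient is $L$-Lipschitz on $[-\delta,1+\delta]^d$. Then for every $\epsilon>0$ there exist integers $n_1,n_2\ge1$, scalars $t_1,t_2>0$, matrices $\boldsymbol{W}_k\in\mathbb{R}^{n_k\times d}$ and vectors $\boldsymbol{a}_k\in\mathbb{R}^{n_k}$, $\boldsymbol{c}_k\in\mathbb{R}^d$ ($k=1,2$) such that, with $g_k(\boldsymbol{x})=\boldsymbol{W}_k^\top\mathrm{softmax}(t_k(\boldsymbol{W}_k\boldsymbol{x}+\boldsymbol{a}_k))+\boldsymbol{c}_k$, $$\sup_{\boldsymbol{x}\in[0,1]^d}\|\nabla F(\boldsymbol{x})-(g_1(\boldsymbol{x})-g_2(\boldsymbol{x}))\|<\epsilon .$$ Moreover $g_1-g_2$ is the gradient of a $C^1$ function on $\mathbb{R}^d$.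
   Context: $\mathrm{softmax}(\boldsymbol{z})_i=e^{z_i}/\sum_j e^{z_j}$. $\|\cdot\|$ is the Euclidean norm. *)

theory Defs
  imports "HOL-Analysis.Analysis"
begin

definition softmax :: "nat \<Rightarrow> (nat \<Rightarrow> real) \<Rightarrow> nat \<Rightarrow> real" where
  "softmax n z i = exp (z i) / (\<Sum>j<n. exp (z j))"

text \<open>The map x |-> W^T softmax(t (W x + a)) + c, where the n x d matrix W is given by
  its rows W 0, ..., W (n-1) :: real^'d and a = (a 0, ..., a (n-1)).\<close>
definition softmax_net ::
  "nat \<Rightarrow> (nat \<Rightarrow> real^'d) \<Rightarrow> (nat \<Rightarrow> real) \<Rightarrow> real^'d \<Rightarrow> real \<Rightarrow> real^'d \<Rightarrow> real^'d" where
  "softmax_net n W a c t x =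
     (\<Sum>i<n. softmax n (\<lambda>j. t * (W j \<bullet> x + a j)) i *\<^sub>R W i) + c"

definition cube :: "real \<Rightarrow> real \<Rightarrow> (real^'d) set" where
  "cube lo hi = {x. \<forall>i. lo \<le> x $ i \<and> x $ i \<le> hi}"

end

theory Submission
  imports Defs "HOL-Real_Asymp.Real_Asymp"
begin

text \<open>Adding \<open>(L + 1) \<parallel>x\<parallel>\<^sup>2\<close> to \<open>F\<close> gives a strongly convex function \<open>\<phi>\<close> whose gradient
  \<open>v = \<nabla>F + 2 (L + 1) x\<close> is Lipschitz, so \<open>\<nabla>F\<close> is the difference of the gradients of two strongly
  convex functions with Lipschitz gradients. Such a gradient \<open>v\<close> is approximated by a softmax net whose rows
  are the values \<open>v y\<^sub>i\<close> at a fine net of points \<open>y\<^sub>i\<close>, with biases \<open>\<phi> y\<^sub>i - v y\<^sub>i \<bullet> y\<^sub>i\<close>: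
  the logits are then \<open>\<phi> x\<close> minus the Bregman divergences of \<open>x\<close> from the \<open>y\<^sub>i\<close>, so at a large
  inverse temperature the softmax weights concentrate on the \<open>y\<^sub>i\<close> close to \<open>x\<close>, where \<open>v y\<^sub>i \<approx> v x\<close>.
  Every softmax net is the gradient of a log-sum-exp function.\<close>

definition bregman :: "('a::real_inner \<Rightarrow> real) \<Rightarrow> ('a \<Rightarrow> 'a) \<Rightarrow> 'a \<Rightarrow> 'a \<Rightarrow> real" where
  "bregman \<phi> v x y = \<phi> x - \<phi> y - v y \<bullet> (x - y)"

lemma bregman_add:
  "bregman (\<lambda>x. \<phi> x + \<psi> x) (\<lambda>x. v x + w x) x y = bregman \<phi> v x y + bregman \<psi> w x y"
  by (simp add: bregman_def inner_add_left)

lemma bregman_scaled_inner_self: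
  "bregman (\<lambda>x. c * (x \<bullet> x)) (\<lambda>x. (2 * c) *\<^sub>R x) x y = c * (norm (x - y))\<^sup>2"
  by (simp add: bregman_def power2_norm_eq_inner inner_diff_left inner_diff_right inner_commute
      algebra_simps)

lemma abs_bregman_le_lipschitz_gradient:
  fixes F :: "'a::euclidean_space \<Rightarrow> real"
  assumes "convex S" and der: "\<And>z. z \<in> S \<Longrightarrow> (F has_derivative (\<lambda>h. G z \<bullet> h)) (at z)"
    and lip: "L-lipschitz_on S G" and x: "x \<in> S" and y: "y \<in> S"
  shows "\<bar>bregman F G x y\<bar> \<le> L * (norm (x - y))\<^sup>2"
proof -
  let ?T = "closed_segment y x"
  have TS: "?T \<subseteq> S" using assms by (simp add: closed_segment_subset)
  have "norm ((\<lambda>z. F z - G y \<bullet> z) x - (\<lambda>z. F z - G y \<bullet> z) y) \<le> (L * norm (x - y)) * norm (x - y)"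
  proof (rule differentiable_bound[where f' = "\<lambda>z h. (G z - G y) \<bullet> h"])
    fix z assume z: "z \<in> ?T"
    have "((\<lambda>z. F z - G y \<bullet> z) has_derivative (\<lambda>h. G z \<bullet> h - G y \<bullet> h)) (at z)"
      using der[of z] z TS by (auto intro!: derivative_eq_intros)
    then show "((\<lambda>z. F z - G y \<bullet> z) has_derivative (\<lambda>h. (G z - G y) \<bullet> h)) (at z within ?T)"
      by (simp add: inner_diff_left has_derivative_at_withinI)
    have "onorm (\<lambda>h. (G z - G y) \<bullet> h) \<le> norm (G z - G y)"
      by (rule onorm_bound) (auto simp: Cauchy_Schwarz_ineq2)
    also have "\<dots> \<le> L * norm (z - y)" using lipschitz_on_normD[OF lip] z TS y by auto
    also have "\<dots> \<le> L * norm (x - y)"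
      using dist_in_closed_segment[OF z] lipschitz_on_nonneg[OF lip]
      by (intro mult_left_mono) (auto simp: dist_norm norm_minus_commute)
    finally show "onorm (\<lambda>h. (G z - G y) \<bullet> h) \<le> L * norm (x - y)" .
  qed auto
  then show ?thesis by (simp add: bregman_def power2_eq_square inner_diff_right algebra_simps)
qed

lemma bregman_add_square_bounds:
  fixes F :: "'a::real_inner \<Rightarrow> real"
  assumes "\<bar>bregman F G x y\<bar> \<le> L * (norm (x - y))\<^sup>2"
  defines "\<phi> \<equiv> \<lambda>x. F x + (L + 1) * (x \<bullet> x)" and "v \<equiv> \<lambda>x. G x + (2 * (L + 1)) *\<^sub>R x"
  shows "(norm (x - y))\<^sup>2 \<le> bregman \<phi> v x y" and "bregman \<phi> v x y \<le> (2 * L + 1) * (norm (x - y))\<^sup>2"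
proof -
  have "bregman \<phi> v x y = bregman F G x y + (L + 1) * (norm (x - y))\<^sup>2"
    unfolding \<phi>_def v_def bregman_add bregman_scaled_inner_self ..
  then show "(norm (x - y))\<^sup>2 \<le> bregman \<phi> v x y" and "bregman \<phi> v x y \<le> (2 * L + 1) * (norm (x - y))\<^sup>2"
    using assms(1) by (auto simp: abs_le_iff algebra_simps)
qed

lemma exists_exp_decay_less:
  fixes A c e :: real
  assumes "c > 0" "e > 0"
  shows "\<exists>t>0. A * exp (- t * c) < e"
proof -
  have "((\<lambda>t. A * exp (- t * c)) \<longlongrightarrow> 0) at_top" using \<open>c > 0\<close> by real_asymp
  then have "\<forall>\<^sub>F t in at_top. A * exp (- t * c) < e \<and> t > (0::real)"
    using \<open>e > 0\<close> by (intro eventually_conj order_tendstoD(2) eventually_gt_at_top) auto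
  then show ?thesis by (metis (no_types, lifting) eventually_at_top_linorder order_refl)
qed

lemma softmax_shift: "softmax n (\<lambda>j. z j + c) i = softmax n z i"
  by (simp add: softmax_def exp_add flip: sum_distrib_right)

lemma softmax_average_dist_le:
  fixes u :: "nat \<Rightarrow> 'a::real_normed_vector" and g :: "nat \<Rightarrow> real"
  assumes i0: "i0 < n" "g i0 \<le> \<eta>" and t: "t > 0"
    and near: "\<And>i. i < n \<Longrightarrow> g i \<le> R \<Longrightarrow> norm (u i - u0) \<le> e"
    and far: "\<And>i. i < n \<Longrightarrow> norm (u i - u0) \<le> B" and e: "e \<ge> 0"
  shows "norm ((\<Sum>i<n. softmax n (\<lambda>j. - t * g j) i *\<^sub>R u i) - u0)
           \<le> e + real n * B * exp (- t * (R - \<eta>))"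
proof -
  define S where "S = (\<Sum>j<n. exp (- t * g j))"
  define p where "p = softmax n (\<lambda>j. - t * g j)"
  have S_ge: "exp (- t * \<eta>) \<le> S"
  proof -
    have "exp (- t * \<eta>) \<le> exp (- t * g i0)" using i0 t by simp
    also have "\<dots> \<le> S" unfolding S_def using i0 by (intro member_le_sum) auto
    finally show ?thesis .
  qed
  then have "S > 0" by (rule less_le_trans[OF exp_gt_zero])
  then have p_nonneg: "p i \<ge> 0" and p_sum: "(\<Sum>i<n. p i) = 1" for i
    by (simp_all add: p_def softmax_def S_def flip: sum_divide_distrib)
  have B: "B \<ge> 0" using far[OF i0(1)] by (meson norm_ge_zero order_trans)
  \<comment> \<open>the denominator contains the term of index i0, so every index with g i > R has weight
      at most exp (- t * (R - \<eta>))\<close>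
  have p_far: "p i \<le> exp (- t * (R - \<eta>))" if "R < g i" for i
  proof -
    have "p i \<le> exp (- t * R) / exp (- t * \<eta>)"
      unfolding p_def softmax_def S_def[symmetric]
      using that t S_ge by (intro frac_le) auto
    then show ?thesis by (simp add: exp_diff[symmetric] algebra_simps)
  qed
  have "(\<Sum>i<n. p i *\<^sub>R u i) - u0 = (\<Sum>i<n. p i *\<^sub>R (u i - u0))"
    by (simp add: scaleR_diff_right sum_subtractf p_sum flip: scaleR_sum_left)
  then have "norm ((\<Sum>i<n. p i *\<^sub>R u i) - u0) \<le> (\<Sum>i<n. p i * norm (u i - u0))"
    using p_nonneg by (auto intro!: order_trans[OF norm_sum] sum_mono)
  also have "\<dots> \<le> (\<Sum>i<n. p i * e + exp (- t * (R - \<eta>)) * B)"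
  proof (intro sum_mono)
    fix i assume i: "i \<in> {..<n}"
    show "p i * norm (u i - u0) \<le> p i * e + exp (- t * (R - \<eta>)) * B"
    proof (cases "g i \<le> R")
      case True
      then show ?thesis using near[of i] i p_nonneg[of i] B
        by (auto intro!: add_increasing2 mult_left_mono)
    next
      case False
      then show ?thesis using far[of i] i p_nonneg[of i] p_far[of i] e
        by (auto intro!: add_increasing mult_mono)
    qed
  qed
  also have "\<dots> = e + real n * B * exp (- t * (R - \<eta>))"
    by (simp add: sum.distrib p_sum flip: sum_distrib_right)
  finally show ?thesis by (simp add: p_def)
qed

lemma softmax_net_eq_softmax_average:
  assumes "\<And>j. j < n \<Longrightarrow> W j \<bullet> x + a j = \<Phi> - g j"
  shows "softmax_net n W a c t x = (\<Sum>i<n. softmax n (\<lambda>j. - t * g j) i *\<^sub>R W i) + c"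
proof -
  have lin: "t * (W j \<bullet> x + a j) = - t * g j + t * \<Phi>" if "j < n" for j
  proof -
    have "t * (W j \<bullet> x + a j) = t * (\<Phi> - g j)" using assms[OF that] by simp
    then show ?thesis by (simp add: algebra_simps)
  qed
  have "softmax n (\<lambda>j. t * (W j \<bullet> x + a j)) i = softmax n (\<lambda>j. - t * g j) i" if "i < n" for i
  proof -
    have "softmax n (\<lambda>j. t * (W j \<bullet> x + a j)) i = softmax n (\<lambda>j. - t * g j + t * \<Phi>) i"
      unfolding softmax_def using lin that by simp
    also have "\<dots> = softmax n (\<lambda>j. - t * g j) i" by (rule softmax_shift)
    finally show ?thesis .
  qed
  then show ?thesis by (simp add: softmax_net_def)
qed

definition softmax_net_potential ::
  "nat \<Rightarrow> (nat \<Rightarrow> real^'d) \<Rightarrow> (nat \<Rightarrow> real) \<Rightarrow> real^'d \<Rightarrow> real \<Rightarrow> real^'d \<Rightarrow> real" where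
  "softmax_net_potential n W a c t x = ln (\<Sum>j<n. exp (t * (W j \<bullet> x + a j))) / t + c \<bullet> x"

lemma softmax_net_potential_has_derivative:
  fixes W :: "nat \<Rightarrow> real^'d"
  assumes "n \<ge> 1" and "t > 0"
  shows "(softmax_net_potential n W a c t has_derivative (\<lambda>h. softmax_net n W a c t x \<bullet> h)) (at x)"
proof -
  define S where "S = (\<Sum>j<n. exp (t * (W j \<bullet> x + a j)))"
  have "S > 0" unfolding S_def using assms by (intro sum_pos) (auto simp: lessThan_empty_iff)
  then have "(softmax_net_potential n W a c t has_derivative
          (\<lambda>h. (1 / S * (\<Sum>j<n. exp (t * (W j \<bullet> x + a j)) * (t * (W j \<bullet> h + 0)))) / t + c \<bullet> h)) (at x)"
    using \<open>t > 0\<close> unfolding S_def softmax_net_potential_def[abs_def]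
    by (intro derivative_eq_intros) (auto intro!: ext simp: divide_simps ac_simps)
  moreover have "(\<lambda>h. (1 / S * (\<Sum>j<n. exp (t * (W j \<bullet> x + a j)) * (t * (W j \<bullet> h + 0)))) / t + c \<bullet> h)
      = (\<lambda>h. softmax_net n W a c t x \<bullet> h)"
    using \<open>t > 0\<close> unfolding softmax_net_def softmax_def S_def
    by (auto simp: inner_add_left inner_sum_left sum_divide_distrib sum_distrib_left intro!: ext sum.cong)
  ultimately show ?thesis by simp
qed

lemma continuous_on_softmax_net:
  fixes W :: "nat \<Rightarrow> real^'d"
  assumes "n \<ge> 1"
  shows "continuous_on UNIV (softmax_net n W a c t)"
proof -
  have "(\<Sum>j<n. exp (t * (W j \<bullet> x + a j))) \<noteq> 0" for x
  proof -
    have "(\<Sum>j<n. exp (t * (W j \<bullet> x + a j))) > 0"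
      using assms by (intro sum_pos) (auto simp: lessThan_empty_iff)
    then show ?thesis by simp
  qed
  then show ?thesis unfolding softmax_net_def[abs_def] softmax_def
    by (auto intro!: continuous_intros)
qed

lemma softmax_net_diff_has_potential:
  fixes W1 W2 :: "nat \<Rightarrow> real^'d"
  assumes "n1 \<ge> 1" "n2 \<ge> 1" "t1 > 0" "t2 > 0"
  shows "\<exists>H :: real^'d \<Rightarrow> real.
           (\<forall>x. (H has_derivative
                  (\<lambda>h. (softmax_net n1 W1 a1 c1 t1 x - softmax_net n2 W2 a2 c2 t2 x) \<bullet> h)) (at x)) \<and>
           continuous_on UNIV (\<lambda>x. softmax_net n1 W1 a1 c1 t1 x - softmax_net n2 W2 a2 c2 t2 x)"
proof (intro exI conjI allI)
  fix x
  show "((\<lambda>x. softmax_net_potential n1 W1 a1 c1 t1 x - softmax_net_potential n2 W2 a2 c2 t2 x)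
      has_derivative (\<lambda>h. (softmax_net n1 W1 a1 c1 t1 x - softmax_net n2 W2 a2 c2 t2 x) \<bullet> h)) (at x)"
    using has_derivative_diff[OF softmax_net_potential_has_derivative softmax_net_potential_has_derivative]
      assms
    by (simp add: inner_diff_left)
qed (intro continuous_on_diff continuous_on_softmax_net assms)

lemma softmax_net_bregman_error:
  fixes \<phi> :: "real^'d \<Rightarrow> real" and v :: "real^'d \<Rightarrow> real^'d"
  assumes lower: "\<And>x y. x \<in> C \<Longrightarrow> y \<in> C \<Longrightarrow> (norm (x - y))\<^sup>2 \<le> bregman \<phi> v x y"
    and lip: "K-lipschitz_on C v"
    and bound: "\<And>x y. x \<in> C \<Longrightarrow> y \<in> C \<Longrightarrow> norm (v x - v y) \<le> B"
    and Y: "\<And>i. i < n \<Longrightarrow> Y i \<in> C"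
    and i0: "i0 < n" "bregman \<phi> v x (Y i0) \<le> \<eta>"
    and x: "x \<in> C" and t: "t > 0" and r: "r \<ge> 0"
  shows "norm (softmax_net n (\<lambda>i. v (Y i)) (\<lambda>i. \<phi> (Y i) - v (Y i) \<bullet> Y i) 0 t x - v x)
           \<le> K * r + real n * B * exp (- t * (r\<^sup>2 - \<eta>))"
proof -
  have "softmax_net n (\<lambda>i. v (Y i)) (\<lambda>i. \<phi> (Y i) - v (Y i) \<bullet> Y i) 0 t x
      = (\<Sum>i<n. softmax n (\<lambda>j. - t * bregman \<phi> v x (Y j)) i *\<^sub>R v (Y i)) + 0"
    by (rule softmax_net_eq_softmax_average[where \<Phi> = "\<phi> x"]) (simp add: bregman_def inner_diff_right)
  moreover have "norm (v (Y i) - v x) \<le> K * r" if "i < n" "bregman \<phi> v x (Y i) \<le> r\<^sup>2" for i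
  proof -
    have "(norm (x - Y i))\<^sup>2 \<le> r\<^sup>2" using lower[OF x Y] that by fastforce
    then have "norm (Y i - x) \<le> r" using r norm_minus_commute by (metis power2_le_imp_le)
    then show ?thesis
      using lipschitz_on_normD[OF lip Y[OF \<open>i < n\<close>] x] lipschitz_on_nonneg[OF lip]
      by (meson mult_left_mono order_trans)
  qed
  moreover have "0 \<le> K * r" using lipschitz_on_nonneg[OF lip] r by simp
  ultimately show ?thesis
    using softmax_average_dist_le[where g = "\<lambda>j. bregman \<phi> v x (Y j)", OF i0 t,
        of "r\<^sup>2" "\<lambda>i. v (Y i)" "v x" "K * r" B] bound[OF Y x]
    by simp
qed

lemma softmax_net_approximates_gradient:
  fixes \<phi> :: "real^'d \<Rightarrow> real" and v :: "real^'d \<Rightarrow> real^'d"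
  assumes C: "compact C" "C \<noteq> {}"
    and lower: "\<And>x y. x \<in> C \<Longrightarrow> y \<in> C \<Longrightarrow> (norm (x - y))\<^sup>2 \<le> bregman \<phi> v x y"
    and upper: "\<And>x y. x \<in> C \<Longrightarrow> y \<in> C \<Longrightarrow> bregman \<phi> v x y \<le> \<beta> * (norm (x - y))\<^sup>2"
    and \<beta>: "\<beta> \<ge> 0" and lip: "K-lipschitz_on C v" and \<epsilon>: "\<epsilon> > 0"
  obtains n W a t where "n \<ge> 1" "t > 0" "\<And>x. x \<in> C \<Longrightarrow> norm (softmax_net n W a 0 t x - v x) \<le> \<epsilon>"
proof -
  have K: "K \<ge> 0" using lip by (rule lipschitz_on_nonneg)
  define r where "r = \<epsilon> / (2 * (K + 1))"
  define \<eta> where "\<eta> = r\<^sup>2 / 2"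
  define \<rho> where "\<rho> = sqrt (\<eta> / (\<beta> + 1))"
  have r: "r > 0" and Kr: "K * r \<le> \<epsilon> / 2"
    using K \<epsilon> by (auto simp: r_def field_simps)
  have \<rho>: "\<rho> > 0" and \<beta>\<rho>: "\<beta> * \<rho>\<^sup>2 \<le> \<eta>"
    using r \<beta> by (auto simp: \<rho>_def \<eta>_def field_simps)
  obtain P where P: "finite P" "P \<subseteq> C" "C \<subseteq> (\<Union>y\<in>P. ball y \<rho>)"
    using seq_compact_imp_totally_bounded[OF compact_imp_seq_compact[OF C(1)]] \<rho> by meson
  obtain n and Y :: "nat \<Rightarrow> real^'d" where PY: "P = Y ` {i. i < n}"
    using finite_imp_nat_seg_image_inj_on[OF P(1)] by blast
  have n: "n \<ge> 1" using C(2) P(3) PY by (cases n) auto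
  have Y: "Y i \<in> C" if "i < n" for i using that P(2) PY by auto
  have cover: "\<exists>i<n. bregman \<phi> v x (Y i) \<le> \<eta>" if x: "x \<in> C" for x
  proof -
    obtain i where i: "i < n" "dist (Y i) x < \<rho>" using x P(3) PY by auto
    have "bregman \<phi> v x (Y i) \<le> \<beta> * \<rho>\<^sup>2"
      using upper[OF x Y[OF i(1)]] i(2) \<beta>
      by (smt (verit, best) dist_norm mult_left_mono norm_ge_zero norm_minus_commute power_mono)
    then show ?thesis using i(1) \<beta>\<rho> by auto
  qed
  have "compact (v ` C)"
    using C(1) by (intro compact_continuous_image lipschitz_on_continuous_on[OF lip])
  then obtain b where b: "\<And>x. x \<in> C \<Longrightarrow> norm (v x) \<le> b"
    by (metis compact_imp_bounded bounded_iff imageI)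
  have bound: "norm (v x - v y) \<le> 2 * b" if "x \<in> C" "y \<in> C" for x y
    using norm_triangle_ineq4[of "v x" "v y"] b[OF that(1)] b[OF that(2)] by linarith
  have "r\<^sup>2 - \<eta> > 0" using r by (simp add: \<eta>_def)
  then obtain t where t: "t > 0" "real n * (2 * b) * exp (- t * (r\<^sup>2 - \<eta>)) < \<epsilon> / 2"
    using exists_exp_decay_less[of "r\<^sup>2 - \<eta>" "\<epsilon> / 2" "real n * (2 * b)"] \<epsilon> by auto
  show thesis
  proof (rule that[OF n t(1)])
    fix x assume x: "x \<in> C"
    obtain i0 where "i0 < n" "bregman \<phi> v x (Y i0) \<le> \<eta>" using cover[OF x] by blast
    from softmax_net_bregman_error[where \<phi> = \<phi> and v = v and Y = Y, OF lower lip bound Y this x t(1) less_imp_le[OF r]]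
    show "norm (softmax_net n (\<lambda>i. v (Y i)) (\<lambda>i. \<phi> (Y i) - v (Y i) \<bullet> Y i) 0 t x - v x) \<le> \<epsilon>"
      using Kr t(2) by linarith
  qed
qed

lemma lipschitz_gradient_approximation_by_softmax_nets:
  fixes F :: "real^'d \<Rightarrow> real" and G :: "real^'d \<Rightarrow> real^'d"
  assumes C: "compact C" "convex C" "C \<noteq> {}"
    and der: "\<And>x. x \<in> C \<Longrightarrow> (F has_derivative (\<lambda>h. G x \<bullet> h)) (at x)"
    and lip: "L-lipschitz_on C G" and \<epsilon>: "\<epsilon> > 0"
  obtains n1 n2 W1 W2 a1 a2 t1 t2 where "n1 \<ge> 1" "n2 \<ge> 1" "t1 > 0" "t2 > 0"
    "\<And>x. x \<in> C \<Longrightarrow> norm (G x - (softmax_net n1 W1 a1 0 t1 x - softmax_net n2 W2 a2 0 t2 x)) \<le> \<epsilon>"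
proof -
  define \<phi> where "\<phi> x = F x + (L + 1) * (x \<bullet> x)" for x :: "real^'d"
  define v where "v x = G x + (2 * (L + 1)) *\<^sub>R x" for x :: "real^'d"
  have L: "L \<ge> 0" using lip by (rule lipschitz_on_nonneg)
  have taylor: "\<bar>bregman F G x y\<bar> \<le> L * (norm (x - y))\<^sup>2" if "x \<in> C" "y \<in> C" for x y
    using abs_bregman_le_lipschitz_gradient[OF C(2) der lip that] .
  have lower: "(norm (x - y))\<^sup>2 \<le> bregman \<phi> v x y"
    and upper: "bregman \<phi> v x y \<le> (2 * L + 1) * (norm (x - y))\<^sup>2" if "x \<in> C" "y \<in> C" for x y
    using bregman_add_square_bounds[OF taylor[OF that]] by (simp_all add: \<phi>_def[abs_def] v_def[abs_def])
  have lip_v: "(L + 2 * (L + 1) * 1)-lipschitz_on C v"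
    unfolding v_def by (intro lipschitz_on_add lip lipschitz_on_cmult_nonneg lipschitz_on_id) (use L in auto)
  obtain n1 W1 a1 t1 where net1: "n1 \<ge> 1" "t1 > 0"
      "\<And>x. x \<in> C \<Longrightarrow> norm (softmax_net n1 W1 a1 0 t1 x - v x) \<le> \<epsilon> / 2"
    by (rule softmax_net_approximates_gradient[where \<epsilon> = "\<epsilon> / 2", OF C(1,3) lower upper _ lip_v]) (use \<epsilon> L in auto)
  have lip_linear: "(2 * (L + 1) * 1)-lipschitz_on C (\<lambda>x. (2 * (L + 1)) *\<^sub>R x)"
    by (intro lipschitz_on_cmult_nonneg lipschitz_on_id) (use L in auto)
  have quad: "bregman (\<lambda>x. (L + 1) * (x \<bullet> x)) (\<lambda>x. (2 * (L + 1)) *\<^sub>R x) x y = (L + 1) * (norm (x - y))\<^sup>2"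
    for x y :: "real^'d"
    by (rule bregman_scaled_inner_self)
  have quad_lower: "(norm (x - y))\<^sup>2 \<le> bregman (\<lambda>x. (L + 1) * (x \<bullet> x)) (\<lambda>x. (2 * (L + 1)) *\<^sub>R x) x y"
    and quad_upper: "bregman (\<lambda>x. (L + 1) * (x \<bullet> x)) (\<lambda>x. (2 * (L + 1)) *\<^sub>R x) x y \<le> (L + 1) * (norm (x - y))\<^sup>2"
    for x y :: "real^'d"
    unfolding quad using mult_right_mono[of 1 "L + 1" "(norm (x - y))\<^sup>2"] L by simp_all
  obtain n2 W2 a2 t2 where net2: "n2 \<ge> 1" "t2 > 0"
      "\<And>x. x \<in> C \<Longrightarrow> norm (softmax_net n2 W2 a2 0 t2 x - (2 * (L + 1)) *\<^sub>R x) \<le> \<epsilon> / 2"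
    by (rule softmax_net_approximates_gradient[where \<epsilon> = "\<epsilon> / 2", OF C(1,3) quad_lower quad_upper _ lip_linear])
      (use \<epsilon> L in auto)
  show thesis
  proof (rule that[OF net1(1) net2(1) net1(2) net2(2)])
    fix x assume x: "x \<in> C"
    have "G x - (softmax_net n1 W1 a1 0 t1 x - softmax_net n2 W2 a2 0 t2 x)
        = (softmax_net n2 W2 a2 0 t2 x - (2 * (L + 1)) *\<^sub>R x) - (softmax_net n1 W1 a1 0 t1 x - v x)"
      by (simp add: v_def algebra_simps)
    then have "norm (G x - (softmax_net n1 W1 a1 0 t1 x - softmax_net n2 W2 a2 0 t2 x))
        \<le> norm (softmax_net n2 W2 a2 0 t2 x - (2 * (L + 1)) *\<^sub>R x) + norm (softmax_net n1 W1 a1 0 t1 x - v x)"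
      by (metis norm_triangle_ineq4)
    then show "norm (G x - (softmax_net n1 W1 a1 0 t1 x - softmax_net n2 W2 a2 0 t2 x)) \<le> \<epsilon>"
      using net1(3)[OF x] net2(3)[OF x] by linarith
  qed
qed

lemma cube_eq_cbox: "cube lo hi = cbox (vec lo) (vec hi :: real^'d)"
  by (auto simp: cube_def mem_box_cart)

theorem theorem2:
  fixes F :: "real^'d \<Rightarrow> real" and G :: "real^'d \<Rightarrow> real^'d"
    and U :: "(real^'d) set" and \<delta> L :: real
  assumes "\<delta> > 0" and "L > 0"
    and "open U" and "cube (-\<delta>) (1 + \<delta>) \<subseteq> U"
    and "\<And>x. x \<in> U \<Longrightarrow> (F has_derivative (\<lambda>h. G x \<bullet> h)) (at x)"
    and "continuous_on U G"
    and "\<And>x y. x \<in> cube (-\<delta>) (1 + \<delta>) \<Longrightarrow> y \<in> cube (-\<delta>) (1 + \<delta>) \<Longrightarrow>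
           norm (G x - G y) \<le> L * norm (x - y)"
  shows "\<forall>\<epsilon>>0. \<exists>n1 n2 :: nat. \<exists>t1 t2 :: real. \<exists>W1 W2 :: nat \<Rightarrow> real^'d.
           \<exists>a1 a2 :: nat \<Rightarrow> real. \<exists>c1 c2 :: real^'d.
           n1 \<ge> 1 \<and> n2 \<ge> 1 \<and> t1 > 0 \<and> t2 > 0 \<and>
           (SUP x\<in>cube 0 1. norm (G x - (softmax_net n1 W1 a1 c1 t1 x - softmax_net n2 W2 a2 c2 t2 x))) < \<epsilon> \<and>
           (\<exists>H :: real^'d \<Rightarrow> real.
              (\<forall>x. (H has_derivative
                     (\<lambda>h. (softmax_net n1 W1 a1 c1 t1 x - softmax_net n2 W2 a2 c2 t2 x) \<bullet> h)) (at x)) \<and>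
              continuous_on UNIV (\<lambda>x. softmax_net n1 W1 a1 c1 t1 x - softmax_net n2 W2 a2 c2 t2 x))"
    (is "\<forall>\<epsilon>>0. ?approximable \<epsilon>")
proof (intro allI impI)
  fix \<epsilon> :: real assume \<epsilon>: "\<epsilon> > 0"
  have C: "compact (cube 0 1 :: (real^'d) set)" "convex (cube 0 1 :: (real^'d) set)"
    by (simp_all add: cube_eq_cbox compact_cbox convex_box(1))
  have "0 \<in> (cube 0 1 :: (real^'d) set)" by (simp add: cube_def)
  then have "cube 0 1 \<noteq> ({} :: (real^'d) set)" by blast
  have sub: "cube 0 1 \<subseteq> cube (-\<delta>) (1 + \<delta>)"
    using \<open>\<delta> > 0\<close> by (auto simp: cube_def) (smt (verit))+
  have der: "(F has_derivative (\<lambda>h. G x \<bullet> h)) (at x)" if "x \<in> cube 0 1" for x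
    using that sub assms(4,5) by blast
  have "L-lipschitz_on (cube 0 1) G"
    using sub assms(2,7) by (intro lipschitz_onI) (auto simp: dist_norm)
  then obtain n1 n2 W1 W2 a1 a2 t1 t2 where nets: "n1 \<ge> 1" "n2 \<ge> 1" "t1 > 0" "t2 > 0"
    "\<And>x. x \<in> cube 0 1 \<Longrightarrow> norm (G x - (softmax_net n1 W1 a1 0 t1 x - softmax_net n2 W2 a2 0 t2 x)) \<le> \<epsilon> / 2"
    using lipschitz_gradient_approximation_by_softmax_nets[where \<epsilon> = "\<epsilon> / 2", OF C \<open>cube 0 1 \<noteq> {}\<close> der]
      \<epsilon> by (metis half_gt_zero)
  have "(SUP x\<in>cube 0 1. norm (G x - (softmax_net n1 W1 a1 0 t1 x - softmax_net n2 W2 a2 0 t2 x))) \<le> \<epsilon> / 2"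
    using \<open>cube 0 1 \<noteq> {}\<close> nets(5) by (rule cSUP_least)
  then have "(SUP x\<in>cube 0 1. norm (G x - (softmax_net n1 W1 a1 0 t1 x - softmax_net n2 W2 a2 0 t2 x))) < \<epsilon>"
    using \<epsilon> by linarith
  then show "?approximable \<epsilon>"
    using nets(1-4) softmax_net_diff_has_potential[OF nets(1-4), of W1 a1 0 W2 a2 0] by blast
qed

end
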